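(* Let $\Omega$ be a Polish space, $m$ a finite positive Borel measure on $\Omega$ and $f$ an entropy function. Then the internal energy $H_{f,m}\colon\mathcal M(\Omega)\to\mathbb R\cup\{+\infty\}$ is totally substitutable.
   Context: An entropy function is a proper, convex, lower semicontinuous $f\colon[0,\infty)\to[0,\infty]$ with $f(s)/s\to+\infty$ as $s\to\infty$. $\mathcal M(\Omega)$ is the Banach lattice of finite signed Borel measures (setwise order, total variation norm). $H_{f,m}(\mu)=\int_\Omega f(d\mu/dm)\,dm$ if $\mu$ is positive and absolutely continuous w.r.t. $m$, and $+\infty$ otherwise (if $m=0$, $H_{f,0}(\mu)=0$ for $\mu=0$ and $+\infty$ otherwise). On a Banach lattice $Y$, $[a,b]=\{y:a\leq y\leq b\}$; $H\colon Y\to\mathbb R\cup\{+\infty\}$ is totally substitutable if for all $\mu_1,\mu_2\in Y$ and all $\mu_1',\mu_2'\in[\mu_1\wedge\mu_2,\mu_1\vee\mu_2]$ with $\mu_1'+\mu_2'=\mu_1+\mu_2$ one has $H(\mu_1')+H(\mu_2')\leq H(\mu_1)+H(\mu_2)$. *)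

theory Defs
  imports "HOL-Analysis.Analysis"
begin

text \<open>Finite signed Borel measures on a Polish space, represented as real-valued
  set functions that are countably additive on the Borel sets (values on
  non-Borel sets are irrelevant: all comparisons below are on Borel sets).\<close>

definition finite_signed_measure :: "('a::topological_space set \<Rightarrow> real) \<Rightarrow> bool" where
  "finite_signed_measure \<mu> \<longleftrightarrow>
     \<mu> {} = 0 \<and>
     (\<forall>A::nat \<Rightarrow> 'a set. range A \<subseteq> sets borel \<longrightarrow> disjoint_family A \<longrightarrow>
        (\<lambda>n. \<mu> (A n)) sums \<mu> (\<Union>n. A n))"

definition sm_le :: "('a::topological_space set \<Rightarrow> real) \<Rightarrow> ('a set \<Rightarrow> real) \<Rightarrow> bool" where
  "sm_le \<mu> \<nu> \<longleftrightarrow> (\<forall>A\<in>sets borel. \<mu> A \<le> \<nu> A)"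

definition sm_inf :: "('a::topological_space set \<Rightarrow> real) \<Rightarrow> ('a set \<Rightarrow> real) \<Rightarrow> 'a set \<Rightarrow> real" where
  "sm_inf \<mu> \<nu> A = Inf {\<mu> B + \<nu> (A - B) | B. B \<in> sets borel \<and> B \<subseteq> A}"

definition sm_sup :: "('a::topological_space set \<Rightarrow> real) \<Rightarrow> ('a set \<Rightarrow> real) \<Rightarrow> 'a set \<Rightarrow> real" where
  "sm_sup \<mu> \<nu> A = Sup {\<mu> B + \<nu> (A - B) | B. B \<in> sets borel \<and> B \<subseteq> A}"

definition sm_measure :: "('a::topological_space set \<Rightarrow> real) \<Rightarrow> 'a measure" where
  "sm_measure \<mu> = measure_of UNIV (sets borel) (\<lambda>A. ennreal (\<mu> A))"

text \<open>Entropy function f : [0,\<infinity>) \<rightarrow> [0,\<infinity>]: proper, convex, lower semicontinuous,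
  superlinear. Values of f on negative reals are irrelevant.\<close>
definition entropy_function :: "(real \<Rightarrow> ereal) \<Rightarrow> bool" where
  "entropy_function f \<longleftrightarrow>
     (\<forall>s\<ge>0. 0 \<le> f s) \<and>
     (\<exists>s\<ge>0. f s < \<infinity>) \<and>
     (\<forall>x\<ge>0. \<forall>y\<ge>0. \<forall>t\<in>{0..1}.
        f ((1 - t) * x + t * y) \<le> ereal (1 - t) * f x + ereal t * f y) \<and>
     (\<forall>s\<ge>0. \<forall>X::nat \<Rightarrow> real. (\<forall>n. 0 \<le> X n) \<longrightarrow> X \<longlonglongrightarrow> s \<longrightarrow>
        f s \<le> liminf (\<lambda>n. f (X n))) \<and>
     ((\<lambda>s. f s / ereal s) \<longlongrightarrow> \<infinity>) at_top"

definition H_fm :: "(real \<Rightarrow> ereal) \<Rightarrow> 'a::topological_space measure \<Rightarrow> ('a set \<Rightarrow> real) \<Rightarrow> ereal" where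
  "H_fm f m \<mu> =
     (if (\<forall>A\<in>sets borel. 0 \<le> \<mu> A) \<and> (\<forall>A\<in>sets borel. emeasure m A = 0 \<longrightarrow> \<mu> A = 0)
      then enn2ereal (\<integral>\<^sup>+ x. e2ennreal (f (enn2real (RN_deriv m (sm_measure \<mu>) x))) \<partial>m)
      else \<infinity>)"

definition totally_substitutable :: "(('a::topological_space set \<Rightarrow> real) \<Rightarrow> ereal) \<Rightarrow> bool" where
  "totally_substitutable H \<longleftrightarrow>
     (\<forall>\<mu>1 \<mu>2 \<mu>1' \<mu>2'.
        finite_signed_measure \<mu>1 \<and> finite_signed_measure \<mu>2 \<and>
        finite_signed_measure \<mu>1' \<and> finite_signed_measure \<mu>2' \<and>
        sm_le (sm_inf \<mu>1 \<mu>2) \<mu>1' \<and> sm_le \<mu>1' (sm_sup \<mu>1 \<mu>2) \<and>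
        sm_le (sm_inf \<mu>1 \<mu>2) \<mu>2' \<and> sm_le \<mu>2' (sm_sup \<mu>1 \<mu>2) \<and>
        (\<forall>A\<in>sets borel. \<mu>1' A + \<mu>2' A = \<mu>1 A + \<mu>2 A)
      \<longrightarrow> H \<mu>1' + H \<mu>2' \<le> H \<mu>1 + H \<mu>2)"

end

theory Submission
  imports Defs
begin

(* Let mu1, mu2 be nonnegative and absolutely continuous with respect to m, with densities
   u1, u2 (otherwise H(mu1) + H(mu2) is infinite). The infimum mu1 \<and> mu2 dominates the measure
   with density min(u1, u2), and the supremum mu1 \<or> mu2 vanishes on m-null sets. Hence the
   substituted measures mu1', mu2' are again nonnegative and absolutely continuous, and their
   densities satisfy min(u1, u2) \<le> ui' and u1' + u2' = u1 + u2 almost everywhere. Pointwise,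
   c + d = a + b with c, d \<ge> min(a, b) puts c and d between a and b, so convexity gives
   f(c) + f(d) \<le> f(a) + f(b); integrating this inequality proves the claim. *)

lemma entropy_function_nonneg: "entropy_function f \<Longrightarrow> 0 \<le> s \<Longrightarrow> 0 \<le> f s"
  unfolding entropy_function_def by blast

lemma entropy_function_convex:
  "entropy_function f \<Longrightarrow> 0 \<le> x \<Longrightarrow> 0 \<le> y \<Longrightarrow> t \<in> {0..1} \<Longrightarrow>
     f ((1 - t) * x + t * y) \<le> ereal (1 - t) * f x + ereal t * f y"
  unfolding entropy_function_def by blast

text \<open>The clamp \<open>max 0\<close> is needed since \<open>f\<close> is unconstrained on negative reals.\<close>

lemma borel_measurable_entropy_function:
  assumes "entropy_function f"
  shows "(\<lambda>s. f (max 0 s)) \<in> borel_measurable borel"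
proof (rule borel_measurableI_le)
  fix c :: ereal
  have "closed {s. f (max 0 s) \<le> c}"
    unfolding closed_sequential_limits
  proof (intro allI impI, elim conjE)
    fix X l assume X: "\<forall>n. X n \<in> {s. f (max 0 s) \<le> c}" and lim: "X \<longlonglongrightarrow> l"
    have "(\<lambda>n. max 0 (X n)) \<longlonglongrightarrow> max 0 l"
      using lim by (intro tendsto_max) auto
    then have "f (max 0 l) \<le> liminf (\<lambda>n. f (max 0 (X n)))"
      using assms unfolding entropy_function_def by simp
    also have "\<dots> \<le> limsup (\<lambda>n. f (max 0 (X n)))"
      by (rule Liminf_le_Limsup) simp
    also have "\<dots> \<le> c"
      using X by (intro Limsup_bounded) auto
    finally show "l \<in> {s. f (max 0 s) \<le> c}" by simp
  qed
  then show "{s \<in> space borel. f (max 0 s) \<le> c} \<in> sets borel"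
    by (simp add: borel_closed)
qed

lemma borel_measurable_entropy_integrand:
  assumes "entropy_function f" and "u \<in> borel_measurable M"
  shows "(\<lambda>x. e2ennreal (f (enn2real (u x)))) \<in> borel_measurable M"
proof -
  have "(\<lambda>x. e2ennreal (f (max 0 (enn2real (u x))))) \<in> borel_measurable M"
    using measurable_compose[OF _ borel_measurable_entropy_function[OF assms(1)]] assms(2)
    by measurable
  then show ?thesis by simp
qed

lemma entropy_function_exchange:
  fixes a b c d :: real
  assumes f: "entropy_function f"
    and "0 \<le> a" "a \<le> b" "a \<le> c" "a \<le> d" and sum: "c + d = a + b"
  shows "f c + f d \<le> f a + f b"
proof (cases "a = b")
  case True
  then have "c = a" "d = a" using assms by auto
  then show ?thesis using True by simp
next
  case False
  define t where "t = (c - a) / (b - a)"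
  have t: "t \<in> {0..1}" "1 - t \<in> {0..1}"
    using assms False unfolding t_def by (auto simp: field_simps)
  have "t * (b - a) = c - a"
    using False unfolding t_def by simp
  then have c: "c = (1 - t) * a + t * b" and d: "d = (1 - (1 - t)) * a + (1 - t) * b"
    using sum by (auto simp: algebra_simps)
  show ?thesis
  proof (cases "f a = \<infinity> \<or> f b = \<infinity>")
    case True
    then show ?thesis
      using entropy_function_nonneg[OF f] assms by auto
  next
    case False
    then obtain ra rb where ra: "f a = ereal ra" and rb: "f b = ereal rb"
      using entropy_function_nonneg[OF f, of a] entropy_function_nonneg[OF f, of b] assms
      by (cases "f a"; cases "f b") auto
    have "f c + f d \<le> (ereal (1 - t) * f a + ereal t * f b) + (ereal (1 - (1 - t)) * f a + ereal (1 - t) * f b)"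
      unfolding c d using assms t by (intro add_mono entropy_function_convex[OF f]) auto
    also have "\<dots> = f a + f b"
      unfolding ra rb by (simp add: algebra_simps)
    finally show ?thesis .
  qed
qed

lemma entropy_function_exchange_ennreal:
  fixes a b c d :: ennreal
  assumes f: "entropy_function f" and "a \<noteq> top" "b \<noteq> top"
    and "min a b \<le> c" "min a b \<le> d" and "c + d = a + b"
  shows "e2ennreal (f (enn2real c)) + e2ennreal (f (enn2real d))
           \<le> e2ennreal (f (enn2real a)) + e2ennreal (f (enn2real b))"
  using assms
proof (induction a b rule: linorder_wlog)
  case (sym a b)
  then show ?case by (simp add: min.commute add.commute)
next
  case (le a b)
  have "c \<noteq> top" "d \<noteq> top"
    using le by (metis ennreal_add_eq_top)+
  then have "f (enn2real c) + f (enn2real d) \<le> f (enn2real a) + f (enn2real b)"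
    using le by (intro entropy_function_exchange[OF f])
      (auto simp: enn2real_mono top.not_eq_extremum simp flip: enn2real_plus)
  then have "e2ennreal (f (enn2real c) + f (enn2real d)) \<le> e2ennreal (f (enn2real a) + f (enn2real b))"
    by (rule e2ennreal_mono)
  then show ?case
    using entropy_function_nonneg[OF f]
    by (simp add: plus_ennreal.abs_eq eq_onp_def)
qed

lemma nn_integral_entropy_exchange:
  assumes f: "entropy_function f"
    and [measurable]: "u1 \<in> borel_measurable M" "u2 \<in> borel_measurable M"
      "v1 \<in> borel_measurable M" "v2 \<in> borel_measurable M"
    and fin: "AE x in M. u1 x \<noteq> top" "AE x in M. u2 x \<noteq> top"
    and min: "AE x in M. min (u1 x) (u2 x) \<le> v1 x" "AE x in M. min (u1 x) (u2 x) \<le> v2 x"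
    and sum: "AE x in M. v1 x + v2 x = u1 x + u2 x"
  shows "(\<integral>\<^sup>+x. e2ennreal (f (enn2real (v1 x))) \<partial>M) + (\<integral>\<^sup>+x. e2ennreal (f (enn2real (v2 x))) \<partial>M)
           \<le> (\<integral>\<^sup>+x. e2ennreal (f (enn2real (u1 x))) \<partial>M) + (\<integral>\<^sup>+x. e2ennreal (f (enn2real (u2 x))) \<partial>M)"
proof -
  note [measurable] = borel_measurable_entropy_integrand[OF f]
  have "AE x in M. e2ennreal (f (enn2real (v1 x))) + e2ennreal (f (enn2real (v2 x)))
                    \<le> e2ennreal (f (enn2real (u1 x))) + e2ennreal (f (enn2real (u2 x)))"
    using fin min sum by eventually_elim (rule entropy_function_exchange_ennreal[OF f])
  then show ?thesis
    by (simp add: nn_integral_add[symmetric] nn_integral_mono_AE)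
qed

lemma AE_le_if_set_nn_integral_le:
  fixes f g :: "'a \<Rightarrow> ennreal"
  assumes [measurable]: "f \<in> borel_measurable M" "g \<in> borel_measurable M"
    and fin: "integral\<^sup>N M g \<noteq> \<infinity>"
    and le: "\<And>A. A \<in> sets M \<Longrightarrow> (\<integral>\<^sup>+x. f x * indicator A x \<partial>M) \<le> (\<integral>\<^sup>+x. g x * indicator A x \<partial>M)"
  shows "AE x in M. f x \<le> g x"
proof -
  define N where "N = {x\<in>space M. g x < f x}"
  have [measurable]: "N \<in> sets M"
    unfolding N_def by measurable
  have "(\<integral>\<^sup>+x. g x * indicator N x \<partial>M) \<le> integral\<^sup>N M g"
    by (intro nn_integral_mono) (simp split: split_indicator)
  then have g_fin: "(\<integral>\<^sup>+x. g x * indicator N x \<partial>M) \<noteq> \<infinity>"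
    using fin by (auto simp: top_unique)
  have "AE x in M. f x * indicator N x \<le> g x * indicator N x"
  proof (rule ccontr)
    assume "\<not> (AE x in M. f x * indicator N x \<le> g x * indicator N x)"
    then have "(\<integral>\<^sup>+x. g x * indicator N x \<partial>M) < (\<integral>\<^sup>+x. f x * indicator N x \<partial>M)"
      using g_fin by (intro nn_integral_less) (auto simp: N_def split: split_indicator)
    with le[of N] show False by simp
  qed
  then show ?thesis
    using AE_space
  proof eventually_elim
    case (elim x)
    then show "f x \<le> g x"
      by (cases "g x < f x") (auto simp: N_def not_less)
  qed
qed

definition sm_nonneg :: "('a::topological_space set \<Rightarrow> real) \<Rightarrow> bool" where
  "sm_nonneg \<mu> \<longleftrightarrow> (\<forall>A\<in>sets borel. 0 \<le> \<mu> A)"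

definition sm_abs_cont :: "'a::topological_space measure \<Rightarrow> ('a set \<Rightarrow> real) \<Rightarrow> bool" where
  "sm_abs_cont m \<mu> \<longleftrightarrow> (\<forall>A\<in>sets borel. emeasure m A = 0 \<longrightarrow> \<mu> A = 0)"

definition sm_has_density :: "'a measure \<Rightarrow> ('a set \<Rightarrow> real) \<Rightarrow> ('a \<Rightarrow> ennreal) \<Rightarrow> bool" where
  "sm_has_density M \<mu> u \<longleftrightarrow>
     u \<in> borel_measurable M \<and> (\<forall>A\<in>sets M. (\<integral>\<^sup>+x. u x * indicator A x \<partial>M) = ennreal (\<mu> A))"

lemma H_fm_nonneg: "0 \<le> H_fm f m \<mu>"
  by (simp add: H_fm_def enn2ereal_nonneg)

lemma H_fm_eq_infinity: "\<not> (sm_nonneg \<mu> \<and> sm_abs_cont m \<mu>) \<Longrightarrow> H_fm f m \<mu> = \<infinity>"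
  unfolding H_fm_def sm_nonneg_def sm_abs_cont_def by auto

lemma H_fm_eq_nn_integral:
  "sm_nonneg \<mu> \<Longrightarrow> sm_abs_cont m \<mu> \<Longrightarrow>
     H_fm f m \<mu> = enn2ereal (\<integral>\<^sup>+x. e2ennreal (f (enn2real (RN_deriv m (sm_measure \<mu>) x))) \<partial>m)"
  by (simp add: H_fm_def sm_nonneg_def sm_abs_cont_def)

lemma sm_inf_nonneg:
  assumes "sm_nonneg \<mu>1" "sm_nonneg \<mu>2" and "A \<in> sets borel"
  shows "0 \<le> sm_inf \<mu>1 \<mu>2 A"
  unfolding sm_inf_def using assms
  by (intro cInf_greatest) (auto simp: sm_nonneg_def)

lemma sm_sup_null:
  assumes m: "sets m = sets borel" and "sm_abs_cont m \<mu>1" "sm_abs_cont m \<mu>2"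
    and A: "A \<in> sets borel" "emeasure m A = 0"
  shows "sm_sup \<mu>1 \<mu>2 A = 0"
proof -
  have "emeasure m B = 0" if "B \<in> sets borel" "B \<subseteq> A" for B
    using emeasure_mono[of B A m] that A m by simp
  then have "{\<mu>1 B + \<mu>2 (A - B) | B. B \<in> sets borel \<and> B \<subseteq> A} = {0}"
    using assms by (auto simp: sm_abs_cont_def intro!: exI[of _ "{}"])
  then show ?thesis
    unfolding sm_sup_def by simp
qed

lemma sets_sm_measure [simp]: "sets (sm_measure \<mu>) = sets borel"
  unfolding sm_measure_def
  by (metis sets.sigma_sets_eq sets.space_closed sets_measure_of space_borel)

lemma emeasure_sm_measure:
  assumes \<mu>: "finite_signed_measure \<mu>" "sm_nonneg \<mu>" and A: "A \<in> sets borel"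
  shows "emeasure (sm_measure \<mu>) A = ennreal (\<mu> A)"
  unfolding sm_measure_def
proof (rule emeasure_measure_of_sigma[OF _ _ _ A])
  show "sigma_algebra UNIV (sets borel)"
    using sets.sigma_algebra_axioms[of borel] by simp
  show "positive (sets borel) (\<lambda>A. ennreal (\<mu> A))"
    using \<mu> by (simp add: positive_def finite_signed_measure_def)
  show "countably_additive (sets borel) (\<lambda>A. ennreal (\<mu> A))"
    unfolding countably_additive_def
  proof (intro allI impI)
    fix B :: "nat \<Rightarrow> 'a set"
    assume B: "range B \<subseteq> sets borel" "disjoint_family B"
    then have sums: "(\<lambda>n. \<mu> (B n)) sums \<mu> (\<Union>n. B n)"
      using \<mu> unfolding finite_signed_measure_def by blast
    then have "(\<Sum>n. ennreal (\<mu> (B n))) = ennreal (\<Sum>n. \<mu> (B n))"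
      using B \<mu> by (intro suminf_ennreal2) (auto simp: sums_summable sm_nonneg_def)
    then show "(\<Sum>n. ennreal (\<mu> (B n))) = ennreal (\<mu> (\<Union>n. B n))"
      using sums_unique[OF sums] by simp
  qed
qed

lemma sm_has_density_RN_deriv:
  assumes m: "finite_measure m" "sets m = sets borel"
    and \<mu>: "finite_signed_measure \<mu>" "sm_nonneg \<mu>" "sm_abs_cont m \<mu>"
  shows "sm_has_density m \<mu> (RN_deriv m (sm_measure \<mu>))"
proof -
  interpret finite_measure m by fact
  have "absolutely_continuous m (sm_measure \<mu>)"
    unfolding absolutely_continuous_def
  proof
    fix A assume "A \<in> null_sets m"
    then show "A \<in> null_sets (sm_measure \<mu>)"
      using \<mu> m by (auto simp: null_sets_def sm_abs_cont_def emeasure_sm_measure)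
  qed
  then have "density m (RN_deriv m (sm_measure \<mu>)) = sm_measure \<mu>"
    using m by (intro density_RN_deriv) (simp_all add: m(2))
  then show ?thesis
    unfolding sm_has_density_def
    using m \<mu> by (auto simp: emeasure_density[symmetric] emeasure_sm_measure)
qed

lemma sm_has_density_nn_integral:
  assumes "sm_has_density M \<mu> u"
  shows "integral\<^sup>N M u = ennreal (\<mu> (space M))"
proof -
  have "integral\<^sup>N M u = (\<integral>\<^sup>+x. u x * indicator (space M) x \<partial>M)"
    by (intro nn_integral_cong) simp
  also have "\<dots> = ennreal (\<mu> (space M))"
    using assms sets.top[of M] unfolding sm_has_density_def by blast
  finally show ?thesis .
qed

lemma sm_has_density_AE_finite:
  assumes "sm_has_density M \<mu> u"
  shows "AE x in M. u x \<noteq> top"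
  using nn_integral_PInf_AE[of u M] sm_has_density_nn_integral[OF assms] assms
  by (simp add: sm_has_density_def)

lemma set_nn_integral_min_le_sm_inf:
  assumes m: "sets M = sets borel"
    and u1: "sm_has_density M \<mu>1 u1" and u2: "sm_has_density M \<mu>2 u2"
    and nonneg: "sm_nonneg \<mu>1" "sm_nonneg \<mu>2" and A: "A \<in> sets borel"
  shows "(\<integral>\<^sup>+x. min (u1 x) (u2 x) * indicator A x \<partial>M) \<le> ennreal (sm_inf \<mu>1 \<mu>2 A)"
proof -
  let ?I = "\<integral>\<^sup>+x. min (u1 x) (u2 x) * indicator A x \<partial>M"
  have [measurable]: "u1 \<in> borel_measurable M" "u2 \<in> borel_measurable M"
    using u1 u2 by (simp_all add: sm_has_density_def)
  have split: "?I \<le> ennreal (\<mu>1 B + \<mu>2 (A - B))" if B: "B \<in> sets borel" "B \<subseteq> A" for B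
  proof -
    have "?I = (\<integral>\<^sup>+x. min (u1 x) (u2 x) * indicator B x + min (u1 x) (u2 x) * indicator (A - B) x \<partial>M)"
      using B by (intro nn_integral_cong) (auto split: split_indicator)
    also have "\<dots> \<le> (\<integral>\<^sup>+x. u1 x * indicator B x + u2 x * indicator (A - B) x \<partial>M)"
      by (intro nn_integral_mono add_mono mult_right_mono) auto
    also have "\<dots> = ennreal (\<mu>1 B) + ennreal (\<mu>2 (A - B))"
      using u1 u2 B A m by (simp add: nn_integral_add sm_has_density_def)
    also have "\<dots> = ennreal (\<mu>1 B + \<mu>2 (A - B))"
      using nonneg B A by (simp add: ennreal_plus sm_nonneg_def)
    finally show ?thesis .
  qed
  have "enn2real ?I \<le> sm_inf \<mu>1 \<mu>2 A"
    unfolding sm_inf_def using split nonneg A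
    by (intro cInf_greatest) (auto intro!: enn2real_leI simp: sm_nonneg_def)
  moreover have "?I \<noteq> top"
    using split[of A] A by (auto simp: top_unique)
  ultimately show ?thesis
    by (metis ennreal_enn2real ennreal_leI less_top)
qed

lemma AE_min_le_sm_density:
  assumes m: "sets M = sets borel"
    and u1: "sm_has_density M \<mu>1 u1" and u2: "sm_has_density M \<mu>2 u2" and v: "sm_has_density M \<nu> v"
    and nonneg: "sm_nonneg \<mu>1" "sm_nonneg \<mu>2" and le: "sm_le (sm_inf \<mu>1 \<mu>2) \<nu>"
  shows "AE x in M. min (u1 x) (u2 x) \<le> v x"
proof (rule AE_le_if_set_nn_integral_le)
  show "(\<lambda>x. min (u1 x) (u2 x)) \<in> borel_measurable M" "v \<in> borel_measurable M"
    using u1 u2 v by (auto simp: sm_has_density_def)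
  show "integral\<^sup>N M v \<noteq> \<infinity>"
    using sm_has_density_nn_integral[OF v] by simp
  fix A assume A: "A \<in> sets M"
  have "(\<integral>\<^sup>+x. min (u1 x) (u2 x) * indicator A x \<partial>M) \<le> ennreal (sm_inf \<mu>1 \<mu>2 A)"
    using set_nn_integral_min_le_sm_inf[OF m u1 u2 nonneg] A m by simp
  also have "\<dots> \<le> ennreal (\<nu> A)"
    using le A m by (simp add: sm_le_def ennreal_leI)
  finally show "(\<integral>\<^sup>+x. min (u1 x) (u2 x) * indicator A x \<partial>M) \<le> (\<integral>\<^sup>+x. v x * indicator A x \<partial>M)"
    using v A by (simp add: sm_has_density_def)
qed

lemma sm_has_density_add:
  assumes "sets M = sets borel"
    and "sm_has_density M \<mu> u" "sm_nonneg \<mu>" and "sm_has_density M \<nu> v" "sm_nonneg \<nu>"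
  shows "sm_has_density M (\<lambda>A. \<mu> A + \<nu> A) (\<lambda>x. u x + v x)"
  using assms
  by (auto simp: sm_has_density_def sm_nonneg_def distrib_right nn_integral_add ennreal_plus)

lemma sm_has_density_unique:
  assumes "finite_measure M" and u: "sm_has_density M \<mu> u" and v: "sm_has_density M \<nu> v"
    and eq: "\<forall>A\<in>sets M. \<mu> A = \<nu> A"
  shows "AE x in M. u x = v x"
  using u v eq
  by (intro finite_measure.density_unique_finite_measure[OF assms(1)]) (auto simp: sm_has_density_def)

lemma sm_nonneg_if_sm_inf_le:
  assumes "sm_nonneg \<mu>1" "sm_nonneg \<mu>2" "sm_le (sm_inf \<mu>1 \<mu>2) \<nu>"
  shows "sm_nonneg \<nu>"
  using sm_inf_nonneg[OF assms(1,2)] assms(3)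
  unfolding sm_nonneg_def sm_le_def by (meson order_trans)

lemma sm_abs_cont_if_le_sm_sup:
  assumes "sets m = sets borel" and "sm_abs_cont m \<mu>1" "sm_abs_cont m \<mu>2"
    and "sm_nonneg \<nu>" "sm_le \<nu> (sm_sup \<mu>1 \<mu>2)"
  shows "sm_abs_cont m \<nu>"
  using assms sm_sup_null[OF assms(1-3)]
  unfolding sm_abs_cont_def sm_nonneg_def sm_le_def by (metis order_antisym)

lemma H_fm_substitution:
  assumes m: "finite_measure m" "sets m = sets borel" and f: "entropy_function f"
    and \<mu>: "finite_signed_measure \<mu>1" "finite_signed_measure \<mu>2"
      "sm_nonneg \<mu>1" "sm_nonneg \<mu>2" "sm_abs_cont m \<mu>1" "sm_abs_cont m \<mu>2"
    and \<nu>: "finite_signed_measure \<nu>1" "finite_signed_measure \<nu>2"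
    and inf: "sm_le (sm_inf \<mu>1 \<mu>2) \<nu>1" "sm_le (sm_inf \<mu>1 \<mu>2) \<nu>2"
    and sup: "sm_le \<nu>1 (sm_sup \<mu>1 \<mu>2)" "sm_le \<nu>2 (sm_sup \<mu>1 \<mu>2)"
    and sum: "\<forall>A\<in>sets borel. \<nu>1 A + \<nu>2 A = \<mu>1 A + \<mu>2 A"
  shows "H_fm f m \<nu>1 + H_fm f m \<nu>2 \<le> H_fm f m \<mu>1 + H_fm f m \<mu>2"
proof -
  have \<nu>_nonneg: "sm_nonneg \<nu>1" "sm_nonneg \<nu>2"
    using \<mu> inf by (blast intro: sm_nonneg_if_sm_inf_le)+
  have \<nu>_abs_cont: "sm_abs_cont m \<nu>1" "sm_abs_cont m \<nu>2"
    using m \<mu> \<nu>_nonneg sup by (blast intro: sm_abs_cont_if_le_sm_sup)+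
  define u1 where "u1 = RN_deriv m (sm_measure \<mu>1)"
  define u2 where "u2 = RN_deriv m (sm_measure \<mu>2)"
  define v1 where "v1 = RN_deriv m (sm_measure \<nu>1)"
  define v2 where "v2 = RN_deriv m (sm_measure \<nu>2)"
  have u: "sm_has_density m \<mu>1 u1" "sm_has_density m \<mu>2 u2"
    unfolding u1_def u2_def using m \<mu> by (auto intro: sm_has_density_RN_deriv)
  have v: "sm_has_density m \<nu>1 v1" "sm_has_density m \<nu>2 v2"
    unfolding v1_def v2_def using m \<nu> \<nu>_nonneg \<nu>_abs_cont by (auto intro: sm_has_density_RN_deriv)
  have "(\<integral>\<^sup>+x. e2ennreal (f (enn2real (v1 x))) \<partial>m) + (\<integral>\<^sup>+x. e2ennreal (f (enn2real (v2 x))) \<partial>m)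
          \<le> (\<integral>\<^sup>+x. e2ennreal (f (enn2real (u1 x))) \<partial>m) + (\<integral>\<^sup>+x. e2ennreal (f (enn2real (u2 x))) \<partial>m)"
  proof (rule nn_integral_entropy_exchange[OF f])
    show "u1 \<in> borel_measurable m" "u2 \<in> borel_measurable m"
      "v1 \<in> borel_measurable m" "v2 \<in> borel_measurable m"
      using u v by (simp_all add: sm_has_density_def)
    show "AE x in m. u1 x \<noteq> top" "AE x in m. u2 x \<noteq> top"
      using u by (simp_all add: sm_has_density_AE_finite)
    show "AE x in m. min (u1 x) (u2 x) \<le> v1 x" "AE x in m. min (u1 x) (u2 x) \<le> v2 x"
      using AE_min_le_sm_density[OF m(2) u] v \<mu>(3,4) inf by simp_all
    show "AE x in m. v1 x + v2 x = u1 x + u2 x"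
      using sm_has_density_unique[OF m(1)
          sm_has_density_add[OF m(2) v(1) \<nu>_nonneg(1) v(2) \<nu>_nonneg(2)]
          sm_has_density_add[OF m(2) u(1) \<mu>(3) u(2) \<mu>(4)]] sum m(2)
      by simp
  qed
  then show ?thesis
    using \<mu> \<nu>_nonneg \<nu>_abs_cont
    unfolding u1_def u2_def v1_def v2_def
    by (simp add: H_fm_eq_nn_integral plus_ennreal.rep_eq[symmetric] less_eq_ennreal.rep_eq)
qed

theorem lemma2p48:
  fixes m :: "'a::polish_space measure" and f :: "real \<Rightarrow> ereal"
  assumes "sets m = sets borel" and "finite_measure m"
    and "entropy_function f"
  shows "totally_substitutable (H_fm f m)"
  unfolding totally_substitutable_def
proof (intro allI impI, elim conjE)
  fix \<mu>1 \<mu>2 \<nu>1 \<nu>2 :: "'a set \<Rightarrow> real"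
  assume substitution: "finite_signed_measure \<mu>1" "finite_signed_measure \<mu>2"
    "finite_signed_measure \<nu>1" "finite_signed_measure \<nu>2"
    "sm_le (sm_inf \<mu>1 \<mu>2) \<nu>1" "sm_le \<nu>1 (sm_sup \<mu>1 \<mu>2)"
    "sm_le (sm_inf \<mu>1 \<mu>2) \<nu>2" "sm_le \<nu>2 (sm_sup \<mu>1 \<mu>2)"
    "\<forall>A\<in>sets borel. \<nu>1 A + \<nu>2 A = \<mu>1 A + \<mu>2 A"
  show "H_fm f m \<nu>1 + H_fm f m \<nu>2 \<le> H_fm f m \<mu>1 + H_fm f m \<mu>2"
  proof (cases "sm_nonneg \<mu>1 \<and> sm_abs_cont m \<mu>1 \<and> sm_nonneg \<mu>2 \<and> sm_abs_cont m \<mu>2")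
    case True
    then show ?thesis
      using assms substitution by (intro H_fm_substitution) auto
  next
    case False
    then have "H_fm f m \<mu>1 = \<infinity> \<or> H_fm f m \<mu>2 = \<infinity>"
      by (auto intro: H_fm_eq_infinity)
    then have "H_fm f m \<mu>1 + H_fm f m \<mu>2 = \<infinity>"
      using H_fm_nonneg[of f m] by auto
    then show ?thesis
      by (metis ereal_less_eq(1))
  qed
qed

end
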